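(* If the Noperthedron $\mathcal{N}$ has Rupert's property, then there exist $\theta_1,\theta_2\in[0,2\pi/15]$, $\varphi_1\in[0,\pi]$, $\varphi_2\in[0,\pi/2]$ and $\alpha\in[-\pi/2,\pi/2]$ such that $R(\alpha)M(\theta_1,\varphi_1)\mathcal{N}\subset\operatorname{int}\operatorname{conv}(M(\theta_2,\varphi_2)\mathcal{N})$.
   Context: $R(\alpha)=\begin{pmatrix}\cos\alpha&-\sin\alpha\\ \sin\alpha&\cos\alpha\end{pmatrix}$, $M(\theta,\varphi)=\begin{pmatrix}-\sin\theta&\cos\theta&0\\ -\cos\theta\cos\varphi&-\sin\theta\cos\varphi&\sin\varphi\end{pmatrix}$, acting elementwise on point sets. A pointsymmetric polyhedron $\mathcal{P}$ has Rupert's property if there exist $\theta_1,\theta_2\in[0,2\pi)$, $\varphi_1,\varphi_2\in[0,\pi]$, $\alpha\in[-\pi,\pi)$ with $R(\alpha)M(\theta_1,\varphi_1)\mathcal{P}\subset\operatorname{int}\operatorname{conv}(M(\theta_2,\varphi_2)\mathcal{P})$. Let $R_z(\beta)=\begin{pmatrix}\cos\beta&-\sin\beta&0\\ \sin\beta&\cos\beta&0\\0&0&1\end{pmatrix}$, $\mathcal{C}_{30}=\{(-1)^\ell R_z(2\pi k/15): k=0,\dots,14,\ \ell=0,1\}$, $C_1=\frac{1}{259375205}(152024884,0,210152163)^t$, $C_2=10^{-10}(6632738028,6106948881,3980949609)^t$, $C_3=10^{-10}(8193990033,5298215096,1230614493)^t$; the Noperthedron is $\mathcal{N}=\mathcal{C}_{30}C_1\cup\mathcal{C}_{30}C_2\cup\mathcal{C}_{30}C_3$.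 *)

theory Defs
  imports "HOL-Analysis.Analysis"
begin

definition Rmat :: "real \<Rightarrow> real^2^2" where
  "Rmat \<alpha> = vector [vector [cos \<alpha>, - sin \<alpha>], vector [sin \<alpha>, cos \<alpha>]]"

definition Mmat :: "real \<Rightarrow> real \<Rightarrow> real^3^2" where
  "Mmat \<theta> \<phi> = vector [vector [- sin \<theta>, cos \<theta>, 0],
                        vector [- cos \<theta> * cos \<phi>, - sin \<theta> * cos \<phi>, sin \<phi>]]"

definition Rz :: "real \<Rightarrow> real^3^3" where
  "Rz \<beta> = vector [vector [cos \<beta>, - sin \<beta>, 0], vector [sin \<beta>, cos \<beta>, 0], vector [0, 0, 1]]"

definition C30 :: "(real^3^3) set" where
  "C30 = {((-1::real) ^ l) *\<^sub>R Rz (2 * pi * real k / 15) | k l. k \<le> (14::nat) \<and> l \<le> (1::nat)}"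

definition NC1 :: "real^3" where
  "NC1 = (1 / 259375205) *\<^sub>R vector [152024884, 0, 210152163]"
definition NC2 :: "real^3" where
  "NC2 = (1 / 10^10) *\<^sub>R vector [6632738028, 6106948881, 3980949609]"
definition NC3 :: "real^3" where
  "NC3 = (1 / 10^10) *\<^sub>R vector [8193990033, 5298215096, 1230614493]"

definition Noperthedron :: "(real^3) set" where
  "Noperthedron = (\<lambda>A. A *v NC1) ` C30 \<union> (\<lambda>A. A *v NC2) ` C30 \<union> (\<lambda>A. A *v NC3) ` C30"

text \<open>Rupert's property for a (point symmetric) polyhedron given by a point set P.\<close>
definition rupert :: "(real^3) set \<Rightarrow> bool" where
  "rupert P \<longleftrightarrow> (\<exists>\<theta>1 \<theta>2 \<phi>1 \<phi>2 \<alpha>.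
      \<theta>1 \<in> {0..<2*pi} \<and> \<theta>2 \<in> {0..<2*pi} \<and> \<phi>1 \<in> {0..pi} \<and> \<phi>2 \<in> {0..pi} \<and> \<alpha> \<in> {-pi..<pi} \<and>
      (\<lambda>p. Rmat \<alpha> *v (Mmat \<theta>1 \<phi>1 *v p)) ` P
        \<subseteq> interior (convex hull ((\<lambda>p. Mmat \<theta>2 \<phi>2 *v p) ` P)))"

end

theory Submission
  imports Defs
begin

text \<open>The Noperthedron is invariant under the group C30, which contains the rotations
  Rz(2 pi k/15) and the point reflection -1. Since Mmat \<theta> \<phi> ** Rz \<beta> = Mmat (\<theta> - \<beta>) \<phi>,
  each of the two longitudes \<theta>1, \<theta>2 can be shifted by a multiple of 2 pi/15 without changing
  the projected point sets; since Rmat (\<alpha> + pi) = - Rmat \<alpha>, point symmetry lets \<alpha> be shifted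
  by pi. Finally, composing both projections with the reflection (x, y) \<mapsto> (-x, y) of the
  plane, which commutes with taking interiors of convex hulls, replaces (\<alpha>, \<theta>i, \<phi>i) by
  (-\<alpha>, \<theta>i - pi, pi - \<phi>i), so that \<phi>2 \<le> pi/2 may be assumed.\<close>

lemma scaleR_matrix_mult: "(a *\<^sub>R A) ** (b *\<^sub>R B) = (a * b) *\<^sub>R (A ** (B :: real^'n^'m))"
  by (simp add: vec_eq_iff matrix_matrix_mult_def sum_distrib_left algebra_simps scaleR_sum_right)

lemma uminus_matrix_vector_mult: "(- A :: real^'n^'m) *v x = - (A *v x)"
  by (simp add: vec_eq_iff matrix_vector_mult_def sum_negf)

lemma matrix_vector_mult_uminus: "(A :: real^'n^'m) *v (- x) = - (A *v x)"
  by (simp add: vec_eq_iff matrix_vector_mult_def sum_negf)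

lemma Rz_add: "Rz a ** Rz b = Rz (a + b)"
  by (simp add: vec_eq_iff forall_3 matrix_matrix_mult_def sum_3 Rz_def cos_add sin_add algebra_simps)

lemma Rz_0: "Rz 0 = mat 1"
  by (simp add: vec_eq_iff forall_3 Rz_def mat_def)

lemma Rz_add_multiple_2pi: "Rz (x + 2 * pi * of_int q) = Rz x"
proof -
  have "cos (x + 2 * pi * of_int q) = cos x" "sin (x + 2 * pi * of_int q) = sin x"
    by (simp_all add: cos_add sin_add)
  then show ?thesis unfolding Rz_def by simp
qed

lemma C30_eq: "C30 = {((-1::real) ^ l) *\<^sub>R Rz (2 * pi * of_int k / 15) | (k::int) (l::nat). True}"
proof (intro equalityI subsetI)
  fix A assume "A \<in> C30"
  then obtain k l :: nat where "A = ((-1::real) ^ l) *\<^sub>R Rz (2 * pi * real k / 15)"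
    unfolding C30_def by blast
  then have "A = ((-1::real) ^ l) *\<^sub>R Rz (2 * pi * of_int (int k) / 15)"
    by simp
  then show "A \<in> {((-1::real) ^ l) *\<^sub>R Rz (2 * pi * of_int k / 15) | (k::int) (l::nat). True}"
    by blast
next
  fix A assume "A \<in> {((-1::real) ^ l) *\<^sub>R Rz (2 * pi * of_int k / 15) | (k::int) (l::nat). True}"
  then obtain k :: int and l :: nat where A: "A = ((-1::real) ^ l) *\<^sub>R Rz (2 * pi * of_int k / 15)"
    by blast
  define r where "r = nat (k mod 15)"
  have k: "k = int r + 15 * (k div 15)" and r: "r \<le> 14"
    unfolding r_def by simp_all
  have "2 * pi * of_int k / 15 = 2 * pi * real r / 15 + 2 * pi * of_int (k div 15)"
    by (subst k) (simp add: field_simps)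
  then have "Rz (2 * pi * of_int k / 15) = Rz (2 * pi * real r / 15)"
    by (simp only: Rz_add_multiple_2pi)
  moreover have "(-1::real) ^ l = (-1) ^ (l mod 2)"
    by (simp add: minus_one_power_iff)
  ultimately have "A = ((-1::real) ^ (l mod 2)) *\<^sub>R Rz (2 * pi * real r / 15)"
    by (simp add: A)
  then show "A \<in> C30"
    unfolding C30_def using r by fastforce
qed

lemma C30_mult: "A \<in> C30 \<Longrightarrow> B \<in> C30 \<Longrightarrow> A ** B \<in> C30"
proof -
  assume "A \<in> C30" "B \<in> C30"
  then obtain k k' :: int and l l' :: nat
    where "A = ((-1::real) ^ l) *\<^sub>R Rz (2 * pi * of_int k / 15)"
      and "B = ((-1::real) ^ l') *\<^sub>R Rz (2 * pi * of_int k' / 15)"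
    unfolding C30_eq by blast
  then have "A ** B = ((-1::real) ^ (l + l')) *\<^sub>R Rz (2 * pi * of_int (k + k') / 15)"
    by (simp add: scaleR_matrix_mult Rz_add power_add add_divide_distrib distrib_left)
  then show ?thesis unfolding C30_eq by blast
qed

lemma C30_right_inverse: "A \<in> C30 \<Longrightarrow> \<exists>B\<in>C30. A ** B = mat 1"
proof -
  assume "A \<in> C30"
  then obtain k :: int and l :: nat where A: "A = ((-1::real) ^ l) *\<^sub>R Rz (2 * pi * of_int k / 15)"
    unfolding C30_eq by blast
  let ?B = "((-1::real) ^ l) *\<^sub>R Rz (2 * pi * of_int (- k) / 15)"
  have "A ** ?B = mat 1"
    by (simp add: A scaleR_matrix_mult Rz_add Rz_0 flip: power_add mult_2)
  moreover have "?B \<in> C30"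
    unfolding C30_eq by blast
  ultimately show ?thesis by blast
qed

lemma C30_left_mult_image: "B \<in> C30 \<Longrightarrow> (\<lambda>A. B ** A) ` C30 = C30"
proof (intro equalityI subsetI)
  fix A assume "B \<in> C30" "A \<in> C30"
  then obtain B' where "B' \<in> C30" "B ** B' = mat 1"
    using C30_right_inverse by blast
  then have "A = B ** (B' ** A)" "B' ** A \<in> C30"
    using \<open>A \<in> C30\<close> by (simp_all add: matrix_mul_assoc C30_mult)
  then show "A \<in> (\<lambda>A. B ** A) ` C30" by blast
qed (auto intro: C30_mult)

lemma Rz_in_C30: "Rz (2 * pi * of_int m / 15) \<in> C30"
  unfolding C30_eq by (rule CollectI, rule exI[of _ m], rule exI[of _ 0]) simp

lemma neg_mat_1_in_C30: "- mat 1 \<in> C30"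
proof -
  have "- mat 1 = ((-1::real) ^ 1) *\<^sub>R Rz (2 * pi * of_int 0 / 15)"
    by (simp add: Rz_0)
  then show ?thesis unfolding C30_eq by blast
qed

lemma Noperthedron_C30_image:
  assumes "B \<in> C30" shows "(\<lambda>p. B *v p) ` Noperthedron = Noperthedron"
proof -
  have "(\<lambda>p. B *v p) ` (\<lambda>A. A *v v) ` C30 = (\<lambda>A. A *v v) ` C30" for v :: "real^3"
  proof -
    have "(\<lambda>p. B *v p) ` (\<lambda>A. A *v v) ` C30 = (\<lambda>A. A *v v) ` (\<lambda>A. B ** A) ` C30"
      by (simp add: image_image matrix_vector_mul_assoc)
    then show ?thesis by (simp only: C30_left_mult_image[OF assms])
  qed
  then show ?thesis unfolding Noperthedron_def image_Un by simp
qed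

lemma Noperthedron_uminus_image: "uminus ` Noperthedron = Noperthedron"
proof -
  have "(\<lambda>p. - mat 1 *v p) = (uminus :: real^3 \<Rightarrow> real^3)"
    by (simp add: fun_eq_iff uminus_matrix_vector_mult)
  then show ?thesis
    using Noperthedron_C30_image[OF neg_mat_1_in_C30] by simp
qed

lemma Mmat_Rz: "Mmat \<theta> \<phi> ** Rz \<beta> = Mmat (\<theta> - \<beta>) \<phi>"
  by (simp add: vec_eq_iff forall_2 forall_3 matrix_matrix_mult_def sum_3 Mmat_def Rz_def
      cos_diff sin_diff algebra_simps)

lemma Rmat_add_pi: "Rmat (\<alpha> + pi) = - Rmat \<alpha>"
  by (simp add: vec_eq_iff forall_2 Rmat_def)

definition reflect_x :: "real^2^2" where
  "reflect_x = vector [vector [-1, 0], vector [0, 1]]"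

lemma reflect_x_Mmat: "reflect_x ** Mmat \<theta> \<phi> = Mmat (\<theta> - pi) (pi - \<phi>)"
  by (simp add: vec_eq_iff forall_2 forall_3 matrix_matrix_mult_def sum_2 Mmat_def reflect_x_def
      cos_diff sin_diff)

lemma reflect_x_Rmat: "reflect_x ** Rmat \<alpha> = Rmat (- \<alpha>) ** reflect_x"
  by (simp add: vec_eq_iff forall_2 matrix_matrix_mult_def sum_2 Rmat_def reflect_x_def)

lemma reflect_x_involution: "reflect_x ** reflect_x = mat 1"
  by (simp add: vec_eq_iff forall_2 matrix_matrix_mult_def sum_2 reflect_x_def mat_def)

definition rupert_witness :: "(real^3) set \<Rightarrow> real \<Rightarrow> real \<Rightarrow> real \<Rightarrow> real \<Rightarrow> real \<Rightarrow> bool" where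
  "rupert_witness P \<alpha> \<theta>1 \<phi>1 \<theta>2 \<phi>2 \<longleftrightarrow>
     (\<lambda>p. Rmat \<alpha> *v (Mmat \<theta>1 \<phi>1 *v p)) ` P \<subseteq> interior (convex hull ((\<lambda>p. Mmat \<theta>2 \<phi>2 *v p) ` P))"

lemma Mmat_image_Rz_invariant:
  assumes "(\<lambda>p. Rz \<beta> *v p) ` P = P"
  shows "(\<lambda>p. Mmat (\<theta> - \<beta>) \<phi> *v p) ` P = (\<lambda>p. Mmat \<theta> \<phi> *v p) ` P"
proof -
  have "(\<lambda>p. Mmat (\<theta> - \<beta>) \<phi> *v p) ` P = (\<lambda>p. Mmat \<theta> \<phi> *v p) ` (\<lambda>p. Rz \<beta> *v p) ` P"
    by (simp add: image_image matrix_vector_mul_assoc Mmat_Rz)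
  then show ?thesis by (simp only: assms)
qed

lemma rupert_witness_rotate:
  assumes "(\<lambda>p. Rz \<beta>1 *v p) ` P = P" and "(\<lambda>p. Rz \<beta>2 *v p) ` P = P"
  shows "rupert_witness P \<alpha> (\<theta>1 - \<beta>1) \<phi>1 (\<theta>2 - \<beta>2) \<phi>2 \<longleftrightarrow> rupert_witness P \<alpha> \<theta>1 \<phi>1 \<theta>2 \<phi>2"
proof -
  have "(\<lambda>p. Rmat \<alpha> *v (Mmat \<theta> \<phi> *v p)) ` P = (\<lambda>v. Rmat \<alpha> *v v) ` (\<lambda>p. Mmat \<theta> \<phi> *v p) ` P"
    for \<theta> \<phi> by (simp add: image_image)
  then show ?thesis
    unfolding rupert_witness_def
    by (simp only: Mmat_image_Rz_invariant[OF assms(1)] Mmat_image_Rz_invariant[OF assms(2)])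
qed

lemma rupert_witness_add_pi:
  assumes "uminus ` P = P"
  shows "rupert_witness P (\<alpha> + pi) \<theta>1 \<phi>1 \<theta>2 \<phi>2 \<longleftrightarrow> rupert_witness P \<alpha> \<theta>1 \<phi>1 \<theta>2 \<phi>2"
proof -
  have "(\<lambda>p. Rmat (\<alpha> + pi) *v (Mmat \<theta>1 \<phi>1 *v p)) ` P
      = (\<lambda>p. Rmat \<alpha> *v (Mmat \<theta>1 \<phi>1 *v p)) ` uminus ` P"
    by (simp add: image_image Rmat_add_pi uminus_matrix_vector_mult matrix_vector_mult_uminus)
  then show ?thesis
    unfolding rupert_witness_def by (simp only: assms)
qed

lemma rupert_witness_reflect:
  assumes "rupert_witness P \<alpha> \<theta>1 \<phi>1 \<theta>2 \<phi>2"
  shows "rupert_witness P (- \<alpha>) (\<theta>1 - pi) (pi - \<phi>1) (\<theta>2 - pi) (pi - \<phi>2)"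
proof -
  let ?F = "\<lambda>v. reflect_x *v v"
  have "linear ?F" by (rule matrix_vector_mul_linear)
  moreover have "inj ?F"
    by (rule inj_on_inverseI[where g = ?F]) (simp add: matrix_vector_mul_assoc reflect_x_involution)
  ultimately have interior_hull: "interior (convex hull (?F ` S)) = ?F ` interior (convex hull S)" for S
    by (simp add: interior_injective_linear_image flip: convex_hull_linear_image)
  have "(\<lambda>p. Rmat (- \<alpha>) *v (Mmat (\<theta>1 - pi) (pi - \<phi>1) *v p)) ` P
      = ?F ` (\<lambda>p. Rmat \<alpha> *v (Mmat \<theta>1 \<phi>1 *v p)) ` P"
    by (simp add: image_image matrix_vector_mul_assoc matrix_mul_assoc reflect_x_Rmat
        flip: reflect_x_Mmat)
  moreover have "(\<lambda>p. Mmat (\<theta>2 - pi) (pi - \<phi>2) *v p) ` P = ?F ` (\<lambda>p. Mmat \<theta>2 \<phi>2 *v p) ` P"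
    by (simp add: image_image matrix_vector_mul_assoc reflect_x_Mmat)
  ultimately show ?thesis
    using assms unfolding rupert_witness_def by (simp add: interior_hull image_mono)
qed

lemma rupert_witness_phi2_reduce:
  assumes "\<phi>1 \<in> {0..pi}" "\<phi>2 \<in> {0..pi}" "\<alpha> \<in> {-pi..pi}" "rupert_witness P \<alpha> \<theta>1 \<phi>1 \<theta>2 \<phi>2"
  obtains \<alpha>' \<theta>1' \<phi>1' \<theta>2' \<phi>2'
  where "\<phi>1' \<in> {0..pi}" "\<phi>2' \<in> {0..pi/2}" "\<alpha>' \<in> {-pi..pi}" "rupert_witness P \<alpha>' \<theta>1' \<phi>1' \<theta>2' \<phi>2'"
proof (cases "\<phi>2 \<le> pi/2")
  case True
  with assms show ?thesis by (intro that) auto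
next
  case False
  with assms show ?thesis by (intro that[OF _ _ _ rupert_witness_reflect]) auto
qed

lemma rupert_witness_alpha_reduce:
  assumes "uminus ` P = P" "\<alpha> \<in> {-pi..pi}" "rupert_witness P \<alpha> \<theta>1 \<phi>1 \<theta>2 \<phi>2"
  obtains \<alpha>' where "\<alpha>' \<in> {-pi/2..pi/2}" "rupert_witness P \<alpha>' \<theta>1 \<phi>1 \<theta>2 \<phi>2"
proof -
  consider "\<alpha> < -pi/2" | "\<alpha> \<in> {-pi/2..pi/2}" | "\<alpha> > pi/2" by fastforce
  then show ?thesis
  proof cases
    case 1
    with assms show ?thesis
      by (intro that[of "\<alpha> + pi"]) (auto simp: rupert_witness_add_pi)
  next
    case 2
    with assms show ?thesis by (intro that)
  next
    case 3
    have "rupert_witness P (\<alpha> - pi) \<theta>1 \<phi>1 \<theta>2 \<phi>2"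
      using rupert_witness_add_pi[OF assms(1), of "\<alpha> - pi"] assms(3) by simp
    with 3 assms(2) show ?thesis
      by (intro that[of "\<alpha> - pi"]) auto
  qed
qed

lemma int_multiple_shift_into_period:
  fixes x c :: real
  assumes "c > 0"
  obtains m :: int where "x - of_int m * c \<in> {0..<c}"
proof
  show "x - of_int \<lfloor>x / c\<rfloor> * c \<in> {0..<c}"
    using floor_divide_lower[OF assms, of x] floor_divide_upper[OF assms, of x]
    by (simp add: algebra_simps)
qed

lemma rupert_witness_theta_reduce:
  assumes "c > 0" "\<And>m :: int. (\<lambda>p. Rz (of_int m * c) *v p) ` P = P"
    and "rupert_witness P \<alpha> \<theta>1 \<phi>1 \<theta>2 \<phi>2"
  obtains \<theta>1' \<theta>2' where "\<theta>1' \<in> {0..<c}" "\<theta>2' \<in> {0..<c}" "rupert_witness P \<alpha> \<theta>1' \<phi>1 \<theta>2' \<phi>2"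
proof -
  obtain m1 m2 :: int where "\<theta>1 - of_int m1 * c \<in> {0..<c}" "\<theta>2 - of_int m2 * c \<in> {0..<c}"
    using int_multiple_shift_into_period[OF assms(1)] by metis
  moreover have "rupert_witness P \<alpha> (\<theta>1 - of_int m1 * c) \<phi>1 (\<theta>2 - of_int m2 * c) \<phi>2"
    using assms(3) by (simp add: rupert_witness_rotate assms(2))
  ultimately show ?thesis by (rule that)
qed

theorem corollary2p4:
  assumes "rupert Noperthedron"
  shows "\<exists>\<theta>1 \<theta>2 \<phi>1 \<phi>2 \<alpha>.
      \<theta>1 \<in> {0..2*pi/15} \<and> \<theta>2 \<in> {0..2*pi/15} \<and> \<phi>1 \<in> {0..pi} \<and> \<phi>2 \<in> {0..pi/2} \<and>
      \<alpha> \<in> {-pi/2..pi/2} \<and>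
      (\<lambda>p. Rmat \<alpha> *v (Mmat \<theta>1 \<phi>1 *v p)) ` Noperthedron
        \<subseteq> interior (convex hull ((\<lambda>p. Mmat \<theta>2 \<phi>2 *v p) ` Noperthedron))"
proof -
  obtain \<alpha> \<theta>1 \<phi>1 \<theta>2 \<phi>2 where "\<phi>1 \<in> {0..pi}" "\<phi>2 \<in> {0..pi}" "\<alpha> \<in> {-pi..pi}"
    and "rupert_witness Noperthedron \<alpha> \<theta>1 \<phi>1 \<theta>2 \<phi>2"
    using assms unfolding rupert_def rupert_witness_def by fastforce
  then obtain \<alpha> \<theta>1 \<phi>1 \<theta>2 \<phi>2 where \<phi>: "\<phi>1 \<in> {0..pi}" "\<phi>2 \<in> {0..pi/2}" and "\<alpha> \<in> {-pi..pi}"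
    and "rupert_witness Noperthedron \<alpha> \<theta>1 \<phi>1 \<theta>2 \<phi>2"
    by (rule rupert_witness_phi2_reduce)
  then obtain \<alpha>' where \<alpha>': "\<alpha>' \<in> {-pi/2..pi/2}" and w: "rupert_witness Noperthedron \<alpha>' \<theta>1 \<phi>1 \<theta>2 \<phi>2"
    using rupert_witness_alpha_reduce[OF Noperthedron_uminus_image] by blast
  have period: "(0::real) < 2 * pi / 15" by simp
  have rotate: "(\<lambda>p. Rz (of_int m * (2 * pi / 15)) *v p) ` Noperthedron = Noperthedron" for m
    using Noperthedron_C30_image[OF Rz_in_C30[of m]] by (simp add: field_simps)
  obtain \<theta>1' \<theta>2' where "\<theta>1' \<in> {0..<2*pi/15}" "\<theta>2' \<in> {0..<2*pi/15}"
    and "rupert_witness Noperthedron \<alpha>' \<theta>1' \<phi>1 \<theta>2' \<phi>2"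
    by (rule rupert_witness_theta_reduce[OF period rotate w])
  with \<phi> \<alpha>' show ?thesis
    unfolding rupert_witness_def by (intro exI conjI) auto
qed

end
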